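(* Let $n \ge 1$, let $\alpha_w, \alpha_n \in (0,1)$ with $\alpha_w < \alpha_n$, and let $w_1, \dots, w_n \in \mathbb{R}_{\ge 0}$ with $W := \sum_{i=1}^n w_i \neq 0$. Then there exist integers $t_1, \dots, t_n \in \mathbb{Z}_{\ge 0}$, with $T := \sum_{i=1}^n t_i$, such that for every $S \subseteq [n]$ with $w(S) < \alpha_w W$ we have $t(S) < \alpha_n T$, and $$T \le \left\lceil \frac{\alpha_w(1-\alpha_w)}{\alpha_n - \alpha_w}\, n \right\rceil.$$
   Context: $[n] := \{1,\dots,n\}$. For $S \subseteq [n]$, $w(S) := \sum_{i\in S} w_i$ and $t(S) := \sum_{i \in S} t_i$. (The Weight Restriction problem asks, given $\alpha_w,\alpha_n$ and the weights, to find nonnegative integers $t_1,\dots,t_n$ minimizing $T$ subject to the displayed constraint; the theorem asserts existence of a feasible assignment, equivalently of a solution, with $T$ bounded as stated.) *)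

theory Defs
  imports Complex_Main
begin

end

theory Submission
  imports Defs
begin

text \<open>Seats are handed out one at a time by a divisor method: the next seat goes to an index
  minimising \<open>(t\<^sub>j + 1 - \<alpha>\<^sub>w) / w\<^sub>j\<close>. This keeps the invariant
  \<open>(t\<^sub>i - \<alpha>\<^sub>w) / w\<^sub>i \<le> (t\<^sub>j + 1 - \<alpha>\<^sub>w) / w\<^sub>j\<close> for all \<open>i, j\<close>.
  Summing it over \<open>i \<in> S\<close> and \<open>j \<notin> S\<close> bounds the share of seats of a light set \<open>S\<close>:
  \<open>t(S) W \<le> T w(S) + \<alpha>\<^sub>w n w(S\<^sup>c)\<close> whenever \<open>w(S) \<le> \<alpha>\<^sub>w W\<close>.
  Once \<open>T (\<alpha>\<^sub>n - \<alpha>\<^sub>w) \<ge> \<alpha>\<^sub>w (1 - \<alpha>\<^sub>w) n\<close>, the right-hand side is below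
  \<open>\<alpha>\<^sub>n T W\<close> for every \<open>S\<close> with \<open>w(S) < \<alpha>\<^sub>w W\<close>.\<close>

definition apportionment_balanced :: "'a set \<Rightarrow> real \<Rightarrow> ('a \<Rightarrow> real) \<Rightarrow> ('a \<Rightarrow> nat) \<Rightarrow> bool" where
  "apportionment_balanced I c w t \<longleftrightarrow>
     (\<forall>i\<in>I. \<forall>j\<in>I. (real (t i) - c) * w j \<le> (real (t j) + 1 - c) * w i)"

lemma apportionment_balanced_zero:
  assumes "0 \<le> c" "c \<le> 1" "\<forall>i\<in>I. 0 \<le> w i"
  shows "apportionment_balanced I c w (\<lambda>_. 0)"
  unfolding apportionment_balanced_def
proof (intro ballI)
  fix i j assume "i \<in> I" "j \<in> I"
  then have "(0 - c) * w j \<le> 0" "0 \<le> (0 + 1 - c) * w i"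
    using assms by (simp_all add: mult_nonpos_nonneg)
  then show "(real 0 - c) * w j \<le> (real 0 + 1 - c) * w i" by simp
qed

lemma apportionment_balanced_step:
  assumes bal: "apportionment_balanced I c w t"
    and "finite I" "c \<le> 1" and nonneg: "\<forall>i\<in>I. 0 \<le> w i" and "\<exists>i\<in>I. 0 < w i"
  obtains k where "k \<in> I" "apportionment_balanced I c w (t(k := Suc (t k)))"
proof -
  define P where "P = {i\<in>I. 0 < w i}"
  define f where "f i = (real (t i) + 1 - c) / w i" for i
  have "finite P" "P \<noteq> {}" using assms unfolding P_def by auto
  then obtain k where "k \<in> P" and k_min: "\<And>j. j \<in> P \<Longrightarrow> f k \<le> f j"
    using arg_min_if_finite(1) arg_min_least by metis
  then have k: "k \<in> I" "0 < w k" unfolding P_def by auto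
  have "apportionment_balanced I c w (t(k := Suc (t k)))"
    unfolding apportionment_balanced_def
  proof (intro ballI)
    fix i j assume i: "i \<in> I" and j: "j \<in> I"
    let ?t' = "t(k := Suc (t k))"
    have old: "(real (t i) - c) * w j \<le> (real (t j) + 1 - c) * w i"
      using bal i j unfolding apportionment_balanced_def by blast
    have "0 \<le> w i" "0 \<le> w j" using nonneg i j by auto
    show "(real (?t' i) - c) * w j \<le> (real (?t' j) + 1 - c) * w i"
    proof (cases "i = k \<and> j \<noteq> k")
      case True
      have "(real (t k) + 1 - c) * w j \<le> (real (t j) + 1 - c) * w k"
      proof (cases "w j = 0")
        case False
        with j \<open>0 \<le> w j\<close> have "j \<in> P" unfolding P_def by auto
        then have "f k \<le> f j" by (rule k_min)
        then show ?thesis using k \<open>0 \<le> w j\<close> False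
          by (simp add: f_def divide_simps mult.commute)
      qed (use k \<open>c \<le> 1\<close> in simp)
      then show ?thesis using True by (simp add: algebra_simps)
    next
      case False
      have "(real (t j) + 1 - c) * w i \<le> (real (?t' j) + 1 - c) * w i"
        using \<open>0 \<le> w i\<close> by (intro mult_right_mono) auto
      then show ?thesis using old False \<open>0 \<le> w i\<close> by (auto simp: algebra_simps)
    qed
  qed
  with k show thesis using that by blast
qed

lemma apportionment_balanced_exists:
  assumes "finite I" "0 \<le> c" "c \<le> 1" "\<forall>i\<in>I. 0 \<le> w i" "\<exists>i\<in>I. 0 < w i"
  shows "\<exists>t. sum t I = T \<and> apportionment_balanced I c w t"
proof (induction T)
  case 0
  show ?case using apportionment_balanced_zero[OF assms(2-4)] by (intro exI[of _ "\<lambda>_. 0"]) simp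
next
  case (Suc T)
  then obtain t where sum_t: "sum t I = T" and bal: "apportionment_balanced I c w t" by blast
  obtain k where k: "k \<in> I" and bal': "apportionment_balanced I c w (t(k := Suc (t k)))"
    using apportionment_balanced_step[OF bal assms(1,3-5)] by blast
  have "sum (t(k := Suc (t k))) I = Suc (sum t I)"
    using k \<open>finite I\<close> by (simp add: sum.remove)
  with sum_t bal' show ?case by blast
qed

lemma apportionment_balanced_cross_sum:
  assumes bal: "apportionment_balanced I c w t" and "S \<subseteq> I"
  shows "(real (sum t S) - c * card S) * sum w (I - S)
           \<le> (real (sum t (I - S)) + (1 - c) * card (I - S)) * sum w S"
proof -
  have "(real (sum t S) - c * card S) * sum w (I - S)
          = (\<Sum>i\<in>S. real (t i) - c) * (\<Sum>j\<in>I - S. w j)"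
    by (simp add: sum_subtractf)
  also have "\<dots> = (\<Sum>i\<in>S. \<Sum>j\<in>I - S. (real (t i) - c) * w j)"
    by (rule sum_product)
  also have "\<dots> \<le> (\<Sum>i\<in>S. \<Sum>j\<in>I - S. w i * (real (t j) + 1 - c))"
    using bal \<open>S \<subseteq> I\<close> unfolding apportionment_balanced_def
    by (intro sum_mono) (auto simp: mult.commute)
  also have "\<dots> = (\<Sum>i\<in>S. w i) * (\<Sum>j\<in>I - S. real (t j) + 1 - c)"
    by (rule sum_product[symmetric])
  also have "\<dots> = (real (sum t (I - S)) + (1 - c) * card (I - S)) * sum w S"
    by (simp add: sum.distrib sum_subtractf algebra_simps)
  finally show ?thesis .
qed

lemma apportionment_balanced_light_subset:
  assumes bal: "apportionment_balanced I c w t" and "finite I" "S \<subseteq> I"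
    and light: "sum w S \<le> c * sum w I"
  shows "real (sum t S) * sum w I \<le> real (sum t I) * sum w S + c * card I * sum w (I - S)"
proof -
  define a b p q k l where "a = real (sum t S)" and "b = real (sum t (I - S))"
    and "p = sum w S" and "q = sum w (I - S)" and "k = real (card S)" and "l = real (card (I - S))"
  have W: "sum w I = p + q"
    unfolding p_def q_def using assms by (simp add: sum.subset_diff[of S I] add.commute)
  have T: "real (sum t I) = a + b"
    unfolding a_def b_def using assms by (simp add: sum.subset_diff[of S I] add.commute)
  have n: "real (card I) = k + l"
    unfolding k_def l_def using assms by (simp add: card_Diff_subset card_mono finite_subset)
  have cross: "(a - c * k) * q \<le> (b + (1 - c) * l) * p"
    using apportionment_balanced_cross_sum[OF bal \<open>S \<subseteq> I\<close>]
    unfolding a_def b_def p_def q_def k_def l_def .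
  have "(1 - c) * p \<le> c * q" using light W by (simp add: p_def algebra_simps)
  then have "l * ((1 - c) * p) \<le> l * (c * q)"
    by (rule mult_left_mono) (simp add: l_def)
  then have "(1 - c) * l * p \<le> c * l * q" by (simp add: mult_ac)
  with cross have "(a - c * k) * q \<le> b * p + c * l * q"
    by (simp add: distrib_right)
  then have "a * (p + q) \<le> (a + b) * p + c * (k + l) * q"
    by (simp add: algebra_simps)
  then show ?thesis
    by (simp only: W T n a_def[symmetric] p_def[symmetric] q_def[symmetric])
qed

lemma light_share_bound:
  fixes a T p q c \<alpha> n :: real
  assumes share: "a * (p + q) \<le> T * p + c * n * q"
    and "0 \<le> p" and light: "p < c * (p + q)" and "0 < c" "c < \<alpha>" "\<alpha> < 1" "0 < n"
    and seats: "c * (1 - c) * n \<le> T * (\<alpha> - c)"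
  shows "a < \<alpha> * T"
proof -
  define W where "W = p + q"
  have "0 < c * W" using \<open>0 \<le> p\<close> light unfolding W_def by linarith
  then have "0 < W" using \<open>0 < c\<close> by (simp add: zero_less_mult_iff)
  then have "c * W < \<alpha> * W" using \<open>c < \<alpha>\<close> by simp
  then have gap: "0 < \<alpha> * W - p" using light unfolding W_def by linarith
  have "(1 - c) * (\<alpha> * W - p) - q * (\<alpha> - c) = (1 - \<alpha>) * (c * W - p)"
    unfolding W_def by (simp add: algebra_simps)
  also have "\<dots> > 0" using light \<open>\<alpha> < 1\<close> unfolding W_def by simp
  finally have "c * n * (q * (\<alpha> - c)) < c * n * ((1 - c) * (\<alpha> * W - p))"
    using \<open>0 < c\<close> \<open>0 < n\<close> by (intro mult_strict_left_mono) simp_all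
  also have "\<dots> = (c * (1 - c) * n) * (\<alpha> * W - p)" by (simp add: mult_ac)
  also have "\<dots> \<le> T * (\<alpha> - c) * (\<alpha> * W - p)"
    using seats gap by (intro mult_right_mono) simp_all
  finally have "(c * n * q) * (\<alpha> - c) < (T * (\<alpha> * W - p)) * (\<alpha> - c)"
    by (simp add: mult_ac)
  then have "c * n * q < T * (\<alpha> * W - p)"
    using \<open>c < \<alpha>\<close> by (simp add: mult_less_cancel_right)
  moreover have "T * (\<alpha> * W - p) = \<alpha> * T * W - T * p" by (simp add: algebra_simps)
  ultimately have "a * W < (\<alpha> * T) * W" using share unfolding W_def by linarith
  with \<open>0 < W\<close> show ?thesis by (simp add: mult_less_cancel_right)
qed

lemma weight_restriction_exists:
  fixes I :: "'a set" and w :: "'a \<Rightarrow> real" and aw an :: real and T :: nat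
  assumes "finite I" and nonneg: "\<forall>i\<in>I. 0 \<le> w i" and "0 < sum w I"
    and "0 < aw" "aw < an" "an < 1"
    and seats: "aw * (1 - aw) * card I \<le> T * (an - aw)"
  shows "\<exists>t. sum t I = T \<and>
           (\<forall>S\<subseteq>I. sum w S < aw * sum w I \<longrightarrow> real (sum t S) < an * T)"
proof -
  have "\<exists>i\<in>I. 0 < w i"
    using \<open>0 < sum w I\<close> sum_nonpos[of I w] by (meson not_le)
  then obtain t where sum_t: "sum t I = T" and bal: "apportionment_balanced I aw w t"
    using apportionment_balanced_exists[OF \<open>finite I\<close>, of aw w T] assms by auto
  have "real (sum t S) < an * T" if "S \<subseteq> I" and light: "sum w S < aw * sum w I" for S
  proof -
    have "real (sum t S) * sum w I \<le> T * sum w S + aw * card I * sum w (I - S)"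
      using apportionment_balanced_light_subset[OF bal \<open>finite I\<close> \<open>S \<subseteq> I\<close>] light assms sum_t
      by simp
    moreover have "sum w I = sum w S + sum w (I - S)"
      using \<open>finite I\<close> \<open>S \<subseteq> I\<close> by (simp add: sum.subset_diff[of S I] add.commute)
    moreover have "0 \<le> sum w S"
      using nonneg \<open>S \<subseteq> I\<close> by (intro sum_nonneg) auto
    moreover have "0 < card I"
      using \<open>0 < sum w I\<close> \<open>finite I\<close> card_gt_0_iff by fastforce
    ultimately show ?thesis
      using light_share_bound[of "real (sum t S)" "sum w S" "sum w (I - S)" T aw "card I" an]
        light seats assms by simp
  qed
  with sum_t show ?thesis by blast
qed

theorem theorem1:
  fixes n :: nat and aw an :: real and w :: "nat \<Rightarrow> real"
  assumes "n \<ge> 1"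
    and "0 < aw" and "aw < 1" and "0 < an" and "an < 1" and "aw < an"
    and "\<forall>i\<in>{1..n}. w i \<ge> 0"
    and "(\<Sum>i\<in>{1..n}. w i) \<noteq> 0"
  shows "\<exists>t :: nat \<Rightarrow> nat.
           (\<forall>S. S \<subseteq> {1..n} \<longrightarrow>
              (\<Sum>i\<in>S. w i) < aw * (\<Sum>i\<in>{1..n}. w i) \<longrightarrow>
              real (\<Sum>i\<in>S. t i) < an * real (\<Sum>i\<in>{1..n}. t i))
         \<and> int (\<Sum>i\<in>{1..n}. t i)
             \<le> \<lceil>aw * (1 - aw) / (an - aw) * real n\<rceil>"
proof -
  define K where "K = aw * (1 - aw) / (an - aw) * real n"
  define T where "T = nat \<lceil>K\<rceil>"
  have "0 \<le> K" using assms unfolding K_def by simp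
  then have T_ceiling: "int T = \<lceil>K\<rceil>" and "K \<le> real T"
    unfolding T_def by linarith+
  then have "aw * (1 - aw) * card {1..n} \<le> T * (an - aw)"
    using assms unfolding K_def by (simp add: field_simps)
  moreover have "0 < sum w {1..n}"
    using assms by (metis sum_nonneg order_le_less)
  ultimately obtain t where "sum t {1..n} = T"
    and "\<forall>S\<subseteq>{1..n}. sum w S < aw * sum w {1..n} \<longrightarrow> real (sum t S) < an * T"
    using weight_restriction_exists[of "{1..n}" w aw an T] assms by auto
  then show ?thesis using T_ceiling unfolding K_def by (intro exI[of _ t]) auto
qed

end
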